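(* Let $R$ be an order and $X$ a (possibly infinite) set of non-zero ideals of $R$. Then $\overline{X}\subseteq\mathcal{I}(R)$ if and only if $X$ has a coprime basis. Moreover, if $X$ has a coprime basis, then $\{I\in\overline{X}: \#\{J\in\overline{X}: I\subseteq J\}=2\}$ is the minimal coprime basis of $X$.
   Context: An order is a domain whose additive group is isomorphic to $\mathbb{Z}^n$ for some $n$; $K=\mathrm{Q}(R)$ denotes its field of fractions. For $R$-submodules $I,J$ of $K$, $I:J=\{x\in K: xJ\subseteq I\}$. An invertible ideal of $R$ is an $R$-submodule $I\subseteq K$ with $IJ=R$ for some $R$-submodule $J\subseteq K$; $\mathcal{I}(R)$ is the group of invertible ideals. $\overline{X}$ denotes the closure of $X\cup\{R\}$ under addition, multiplication, and integral division, i.e. forming $I:J$ for ideals $I,J\subseteq R$ with $J$ invertible and $I:J\subseteq R$. A coprime basis for $X$ is a set $B$ of invertible ideals strictly contained in $R$ which are pairwise coprime (i.e. $\mathfrak{a}+\mathfrak{b}=R$ for distinct $\mathfrak{a},\mathfrak{b}\in B$) and such that $X$ is contained in the subgroup $\langle B\rangle$ of $\mathcal{I}(R)$ generated by $B$. Coprime bases are partially ordered by $B\le C$ iff $\langle B\rangle\subseteq\langle C\rangle$. *)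

theory Defs
  imports Main
begin

text \<open>An order is modelled as a subring R of an ambient field 'a whose additive
group is free abelian of finite rank (has a finite Z-basis).\<close>

definition is_order :: "'a::field set \<Rightarrow> bool" where
  "is_order R \<longleftrightarrow>
     0 \<in> R \<and> 1 \<in> R \<and>
     (\<forall>x\<in>R. \<forall>y\<in>R. x + y \<in> R \<and> x - y \<in> R \<and> x * y \<in> R) \<and>
     (\<exists>(n::nat) (b::nat \<Rightarrow> 'a). (\<forall>i<n. b i \<in> R) \<and>
        (\<forall>r\<in>R. \<exists>!c::nat \<Rightarrow> int. (\<forall>i\<ge>n. c i = 0) \<and> r = (\<Sum>i<n. of_int (c i) * b i)))"

definition frac_field :: "'a::field set \<Rightarrow> 'a set" where
  "frac_field R = {a / b | a b. a \<in> R \<and> b \<in> R \<and> b \<noteq> 0}"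

definition submodule :: "'a::field set \<Rightarrow> 'a set \<Rightarrow> bool" where
  "submodule R M \<longleftrightarrow> M \<subseteq> frac_field R \<and> 0 \<in> M \<and>
     (\<forall>x\<in>M. \<forall>y\<in>M. x + y \<in> M) \<and> (\<forall>r\<in>R. \<forall>x\<in>M. r * x \<in> M)"

definition ideal_of :: "'a::field set \<Rightarrow> 'a set \<Rightarrow> bool" where
  "ideal_of R I \<longleftrightarrow> submodule R I \<and> I \<subseteq> R"

definition idl_sum :: "'a::field set \<Rightarrow> 'a set \<Rightarrow> 'a set" where
  "idl_sum I J = {x + y | x y. x \<in> I \<and> y \<in> J}"

definition idl_mult :: "'a::field set \<Rightarrow> 'a set \<Rightarrow> 'a set" where
  "idl_mult I J = {(\<Sum>i<n. f i * g i) | (n::nat) f g. \<forall>i<n. f i \<in> I \<and> g i \<in> J}"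

definition colon :: "'a::field set \<Rightarrow> 'a set \<Rightarrow> 'a set \<Rightarrow> 'a set" where
  "colon R I J = {x \<in> frac_field R. \<forall>y\<in>J. x * y \<in> I}"

definition invertible :: "'a::field set \<Rightarrow> 'a set \<Rightarrow> bool" where
  "invertible R I \<longleftrightarrow> submodule R I \<and> (\<exists>J. submodule R J \<and> idl_mult I J = R)"

inductive_set ideal_closure :: "'a::field set \<Rightarrow> 'a set set \<Rightarrow> 'a set set"
  for R :: "'a set" and X :: "'a set set" where
  base_R: "R \<in> ideal_closure R X"
| base_X: "I \<in> X \<Longrightarrow> I \<in> ideal_closure R X"
| add: "I \<in> ideal_closure R X \<Longrightarrow> J \<in> ideal_closure R X \<Longrightarrow> idl_sum I J \<in> ideal_closure R X"
| mult: "I \<in> ideal_closure R X \<Longrightarrow> J \<in> ideal_closure R X \<Longrightarrow> idl_mult I J \<in> ideal_closure R X"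
| div: "I \<in> ideal_closure R X \<Longrightarrow> J \<in> ideal_closure R X \<Longrightarrow> ideal_of R I \<Longrightarrow> ideal_of R J \<Longrightarrow>
        invertible R J \<Longrightarrow> colon R I J \<subseteq> R \<Longrightarrow> colon R I J \<in> ideal_closure R X"

text \<open>Subgroup of the group of invertible ideals generated by B (inverse of I is R:I).\<close>
inductive_set gen_subgroup :: "'a::field set \<Rightarrow> 'a set set \<Rightarrow> 'a set set"
  for R :: "'a set" and B :: "'a set set" where
  one: "R \<in> gen_subgroup R B"
| gen: "I \<in> B \<Longrightarrow> I \<in> gen_subgroup R B"
| inv: "I \<in> B \<Longrightarrow> colon R R I \<in> gen_subgroup R B"
| mult: "I \<in> gen_subgroup R B \<Longrightarrow> J \<in> gen_subgroup R B \<Longrightarrow> idl_mult I J \<in> gen_subgroup R B"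

definition coprime_basis :: "'a::field set \<Rightarrow> 'a set set \<Rightarrow> 'a set set \<Rightarrow> bool" where
  "coprime_basis R X B \<longleftrightarrow>
     (\<forall>I\<in>B. ideal_of R I \<and> invertible R I \<and> I \<noteq> R) \<and>
     (\<forall>I\<in>B. \<forall>J\<in>B. I \<noteq> J \<longrightarrow> idl_sum I J = R) \<and>
     X \<subseteq> gen_subgroup R B"

end

theory Submission
  imports Defs
begin

text \<open>
  Given a coprime basis B, the products of members of B form a monoid of invertible ideals in
  which every member of B behaves like a prime (by coprimality), so containment is divisibility.
  Hence this monoid is closed under sums and integral quotients and contains every integral
  element of the group generated by B; in particular it contains the closure of X, whose members
  are therefore invertible.

  Conversely, suppose the closure consists of invertible ideals. A nonzero ideal I of an order
  contains a nonzero integer M, and ideals containing M are determined by their images in the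
  finite ring R/MR, so I has only finitely many overideals. Choose a maximal proper member P of
  the closure above I; then I = P (I:P) with I:P in the closure and strictly larger than I, and
  induction on the number of overideals writes I as a product of such maximal members. These
  are exactly the members with two overideals in the closure (themselves and R), they are
  pairwise coprime, and they lie in the monoid of any coprime basis, which gives minimality.
\<close>

section \<open>Sums and products of sets of field elements\<close>

lemma mem_idl_mult_iff:
  "x \<in> idl_mult I J \<longleftrightarrow> (\<exists>(n::nat) f g. x = (\<Sum>i<n. f i * g i) \<and> (\<forall>i<n. f i \<in> I \<and> g i \<in> J))"
  unfolding idl_mult_def by blast

lemma idl_mult_memI: "a \<in> I \<Longrightarrow> b \<in> J \<Longrightarrow> a * b \<in> idl_mult I J"
  unfolding idl_mult_def by (rule CollectI, rule exI[of _ 1]) auto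

lemma zero_in_idl_mult: "0 \<in> idl_mult I J"
  unfolding idl_mult_def by (rule CollectI, rule exI[of _ 0]) auto

lemma idl_mult_add_closed:
  assumes "x \<in> idl_mult I J" "y \<in> idl_mult I J"
  shows "x + y \<in> idl_mult I J"
proof -
  obtain n :: nat and f g where x: "x = (\<Sum>i<n. f i * g i)" "\<forall>i<n. f i \<in> I \<and> g i \<in> J"
    using assms(1) unfolding mem_idl_mult_iff by blast
  obtain m :: nat and f' g' where y: "y = (\<Sum>i<m. f' i * g' i)" "\<forall>i<m. f' i \<in> I \<and> g' i \<in> J"
    using assms(2) unfolding mem_idl_mult_iff by blast
  define F where "F i = (if i < n then f i else f' (i - n))" for i
  define G where "G i = (if i < n then g i else g' (i - n))" for i
  have "(\<Sum>i<n + m. F i * G i) = (\<Sum>i<n. F i * G i) + (\<Sum>i\<in>{n..<m + n}. F i * G i)"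
    by (simp add: lessThan_atLeast0 sum.atLeastLessThan_concat add.commute)
  also have "\<dots> = x + y"
    unfolding x(1) y(1) sum.shift_bounds_nat_ivl[of _ 0 n m, simplified]
    by (simp add: F_def G_def atLeast0LessThan)
  finally have "x + y = (\<Sum>i<n + m. F i * G i)" ..
  moreover have "\<forall>i<n + m. F i \<in> I \<and> G i \<in> J"
    using x(2) y(2) by (auto simp: F_def G_def)
  ultimately show ?thesis unfolding mem_idl_mult_iff by blast
qed

lemma idl_mult_least:
  assumes "0 \<in> M" and "\<And>x y. x \<in> M \<Longrightarrow> y \<in> M \<Longrightarrow> x + y \<in> M"
    and "\<And>a b. a \<in> I \<Longrightarrow> b \<in> J \<Longrightarrow> a * b \<in> M"
  shows "idl_mult I J \<subseteq> M"
proof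
  fix x assume "x \<in> idl_mult I J"
  then obtain n :: nat and f g where x: "x = (\<Sum>i<n. f i * g i)" "\<forall>i<n. f i \<in> I \<and> g i \<in> J"
    unfolding mem_idl_mult_iff by blast
  have "(\<Sum>i<m. f i * g i) \<in> M" if "m \<le> n" for m
    using that by (induction m) (use assms x(2) in auto)
  then show "x \<in> M" using x(1) by blast
qed

lemma idl_mult_mono: "I \<subseteq> I' \<Longrightarrow> J \<subseteq> J' \<Longrightarrow> idl_mult I J \<subseteq> idl_mult I' J'"
  unfolding idl_mult_def by blast

lemma idl_mult_commute: "idl_mult I J = idl_mult J I"
proof -
  have "idl_mult I J \<subseteq> idl_mult J I" for I J :: "'a::field set"
  proof (rule idl_mult_least[OF zero_in_idl_mult idl_mult_add_closed])
    fix a b assume "a \<in> I" "b \<in> J"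
    then show "a * b \<in> idl_mult J I" using idl_mult_memI[of b J a I] by (simp add: mult.commute)
  qed
  then show ?thesis by blast
qed

lemma idl_mult_assoc: "idl_mult (idl_mult I J) K = idl_mult I (idl_mult J K)"
proof -
  have *: "idl_mult (idl_mult I J) K \<subseteq> idl_mult I (idl_mult J K)" for I J K :: "'a::field set"
  proof (rule idl_mult_least)
    fix u c assume "u \<in> idl_mult I J" "c \<in> K"
    have "idl_mult I J \<subseteq> {u. u * c \<in> idl_mult I (idl_mult J K)}"
      by (rule idl_mult_least)
        (use \<open>c \<in> K\<close> in \<open>auto simp: distrib_right mult.assoc
           intro: zero_in_idl_mult idl_mult_add_closed idl_mult_memI\<close>)
    then show "u * c \<in> idl_mult I (idl_mult J K)" using \<open>u \<in> idl_mult I J\<close> by blast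
  qed (auto intro: zero_in_idl_mult idl_mult_add_closed)
  have "idl_mult I (idl_mult J K) = idl_mult (idl_mult K J) I"
    by (simp add: idl_mult_commute)
  also have "\<dots> \<subseteq> idl_mult K (idl_mult J I)" by (rule *)
  also have "\<dots> = idl_mult (idl_mult I J) K" by (simp add: idl_mult_commute)
  finally show ?thesis using * by blast
qed

lemma idl_mult_left_commute: "idl_mult I (idl_mult J K) = idl_mult J (idl_mult I K)"
  unfolding idl_mult_assoc[symmetric] idl_mult_commute[of I J] ..

lemmas idl_mult_ac = idl_mult_assoc idl_mult_commute idl_mult_left_commute

lemma mem_idl_sum_iff: "x \<in> idl_sum I J \<longleftrightarrow> (\<exists>a\<in>I. \<exists>b\<in>J. x = a + b)"
  unfolding idl_sum_def by blast

lemma idl_sum_commute: "idl_sum I J = idl_sum J I"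
proof -
  have "idl_sum I J \<subseteq> idl_sum J I" for I J :: "'a::field set"
  proof
    fix x assume "x \<in> idl_sum I J"
    then obtain a b where "a \<in> I" "b \<in> J" "x = b + a"
      unfolding mem_idl_sum_iff by (auto simp: add.commute)
    then show "x \<in> idl_sum J I" unfolding mem_idl_sum_iff by blast
  qed
  then show ?thesis by blast
qed

lemma idl_sum_mono: "I \<subseteq> I' \<Longrightarrow> J \<subseteq> J' \<Longrightarrow> idl_sum I J \<subseteq> idl_sum I' J'"
  unfolding idl_sum_def by blast

lemma idl_sum_least:
  "I \<subseteq> M \<Longrightarrow> J \<subseteq> M \<Longrightarrow> (\<And>x y. x \<in> M \<Longrightarrow> y \<in> M \<Longrightarrow> x + y \<in> M) \<Longrightarrow> idl_sum I J \<subseteq> M"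
  unfolding idl_sum_def by blast

lemma idl_sum_upper1: "0 \<in> J \<Longrightarrow> I \<subseteq> idl_sum I J"
  unfolding idl_sum_def by force

lemma idl_sum_upper2: "0 \<in> I \<Longrightarrow> J \<subseteq> idl_sum I J"
  unfolding idl_sum_def by force

lemma idl_sum_add_closed:
  assumes "\<And>x y. x \<in> I \<Longrightarrow> y \<in> I \<Longrightarrow> x + y \<in> I" "\<And>x y. x \<in> J \<Longrightarrow> y \<in> J \<Longrightarrow> x + y \<in> J"
    and "x \<in> idl_sum I J" "y \<in> idl_sum I J"
  shows "x + y \<in> idl_sum I J"
proof -
  obtain a b a' b' where "a \<in> I" "b \<in> J" "a' \<in> I" "b' \<in> J" "x = a + b" "y = a' + b'"
    using assms(3,4) unfolding mem_idl_sum_iff by blast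
  then have "x + y = (a + a') + (b + b')" "a + a' \<in> I" "b + b' \<in> J"
    using assms(1,2) by (auto simp: algebra_simps)
  then show ?thesis unfolding mem_idl_sum_iff by blast
qed

lemma idl_mult_idl_sum_distrib:
  assumes "0 \<in> I" "0 \<in> J"
  shows "idl_mult (idl_sum I J) K = idl_sum (idl_mult I K) (idl_mult J K)"
proof
  show "idl_mult (idl_sum I J) K \<subseteq> idl_sum (idl_mult I K) (idl_mult J K)"
  proof (rule idl_mult_least)
    fix u c assume "u \<in> idl_sum I J" "c \<in> K"
    then obtain a b where "a \<in> I" "b \<in> J" "u * c = a * c + b * c"
      unfolding mem_idl_sum_iff by (auto simp: distrib_right)
    then show "u * c \<in> idl_sum (idl_mult I K) (idl_mult J K)"
      using \<open>c \<in> K\<close> unfolding mem_idl_sum_iff by (blast intro: idl_mult_memI)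
  next
    have "(0::'a) = 0 + 0" by simp
    then show "0 \<in> idl_sum (idl_mult I K) (idl_mult J K)"
      unfolding mem_idl_sum_iff using zero_in_idl_mult by blast
  qed (auto intro: idl_sum_add_closed idl_mult_add_closed)
  show "idl_sum (idl_mult I K) (idl_mult J K) \<subseteq> idl_mult (idl_sum I J) K"
    using idl_mult_mono[OF idl_sum_upper1[OF assms(2)] order_refl]
      idl_mult_mono[OF idl_sum_upper2[OF assms(1)] order_refl]
    by (rule idl_sum_least) (rule idl_mult_add_closed)
qed

section \<open>Fractional ideals of a subring of a field\<close>

locale field_subring =
  fixes R :: "'a::field set"
  assumes zero_mem: "0 \<in> R" and one_mem: "1 \<in> R"
    and add_mem: "x \<in> R \<Longrightarrow> y \<in> R \<Longrightarrow> x + y \<in> R"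
    and diff_mem: "x \<in> R \<Longrightarrow> y \<in> R \<Longrightarrow> x - y \<in> R"
    and mult_mem: "x \<in> R \<Longrightarrow> y \<in> R \<Longrightarrow> x * y \<in> R"
begin

abbreviation inv_ideal :: "'a set \<Rightarrow> 'a set" where
  "inv_ideal I \<equiv> colon R R I"

lemma uminus_mem: "x \<in> R \<Longrightarrow> - x \<in> R"
  using diff_mem[OF zero_mem] by fastforce

lemma subset_frac_field: "R \<subseteq> frac_field R"
  unfolding frac_field_def using one_mem by force

lemma frac_field_memI: "a \<in> R \<Longrightarrow> b \<in> R \<Longrightarrow> b \<noteq> 0 \<Longrightarrow> a / b \<in> frac_field R"
  unfolding frac_field_def by blast

lemma frac_field_add: "x \<in> frac_field R \<Longrightarrow> y \<in> frac_field R \<Longrightarrow> x + y \<in> frac_field R"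
proof -
  assume "x \<in> frac_field R" "y \<in> frac_field R"
  then obtain a b c d where "a \<in> R" "b \<in> R" "b \<noteq> 0" "x = a / b" "c \<in> R" "d \<in> R" "d \<noteq> 0" "y = c / d"
    unfolding frac_field_def by blast
  moreover from this have "x + y = (a * d + c * b) / (b * d)" by (simp add: field_simps)
  ultimately show ?thesis
    using frac_field_memI[of "a * d + c * b" "b * d"] by (simp add: add_mem mult_mem)
qed

lemma frac_field_mult: "x \<in> frac_field R \<Longrightarrow> y \<in> frac_field R \<Longrightarrow> x * y \<in> frac_field R"
proof -
  assume "x \<in> frac_field R" "y \<in> frac_field R"
  then obtain a b c d where "a \<in> R" "b \<in> R" "b \<noteq> 0" "x = a / b" "c \<in> R" "d \<in> R" "d \<noteq> 0" "y = c / d"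
    unfolding frac_field_def by blast
  moreover from this have "x * y = (a * c) / (b * d)" by simp
  ultimately show ?thesis by (auto intro: frac_field_memI mult_mem)
qed

lemma submodule_R: "submodule R R"
  unfolding submodule_def using subset_frac_field zero_mem add_mem mult_mem by blast

lemma ideal_of_R: "ideal_of R R"
  unfolding ideal_of_def using submodule_R by blast

lemma submodule_idl_mult:
  assumes I: "submodule R I" and J: "submodule R J"
  shows "submodule R (idl_mult I J)"
  unfolding submodule_def
proof (intro conjI ballI)
  show "idl_mult I J \<subseteq> frac_field R"
    by (rule idl_mult_least)
      (use I J in \<open>auto simp: submodule_def intro: frac_field_add frac_field_mult\<close>)
  show "r * x \<in> idl_mult I J" if "r \<in> R" "x \<in> idl_mult I J" for r x
  proof -
    have "idl_mult I J \<subseteq> {x. r * x \<in> idl_mult I J}"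
      by (rule idl_mult_least) (use I \<open>r \<in> R\<close> in
          \<open>auto simp: submodule_def distrib_left mult.assoc[symmetric]
            intro: zero_in_idl_mult idl_mult_add_closed idl_mult_memI\<close>)
    then show ?thesis using that by blast
  qed
qed (auto intro: zero_in_idl_mult idl_mult_add_closed)

lemma ideal_of_idl_mult:
  assumes "ideal_of R I" "ideal_of R J"
  shows "ideal_of R (idl_mult I J)"
proof -
  have "idl_mult I J \<subseteq> R"
    by (rule idl_mult_least[OF zero_mem add_mem])
      (use assms in \<open>auto simp: ideal_of_def intro: mult_mem\<close>)
  then show ?thesis using assms submodule_idl_mult unfolding ideal_of_def by blast
qed

lemma submodule_idl_sum:
  assumes I: "submodule R I" and J: "submodule R J"
  shows "submodule R (idl_sum I J)"
  unfolding submodule_def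
proof (intro conjI ballI)
  show "idl_sum I J \<subseteq> frac_field R"
    by (rule idl_sum_least) (use I J in \<open>auto simp: submodule_def intro: frac_field_add\<close>)
  show "0 \<in> idl_sum I J"
    using I J idl_sum_upper1[of J I] unfolding submodule_def by blast
  show "x + y \<in> idl_sum I J" if "x \<in> idl_sum I J" "y \<in> idl_sum I J" for x y
    using I J that by (intro idl_sum_add_closed) (auto simp: submodule_def)
  show "r * x \<in> idl_sum I J" if "r \<in> R" and x: "x \<in> idl_sum I J" for r x
  proof -
    obtain a b where "a \<in> I" "b \<in> J" "r * x = r * a + r * b"
      using x unfolding mem_idl_sum_iff by (auto simp: distrib_left)
    then show ?thesis using I J \<open>r \<in> R\<close> unfolding submodule_def mem_idl_sum_iff by blast
  qed
qed

lemma ideal_of_idl_sum: "ideal_of R I \<Longrightarrow> ideal_of R J \<Longrightarrow> ideal_of R (idl_sum I J)"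
  unfolding ideal_of_def using submodule_idl_sum idl_sum_least[of _ R, OF _ _ add_mem] by blast

lemma idl_mult_R_left: "submodule R M \<Longrightarrow> idl_mult R M = M"
  using idl_mult_memI[OF one_mem, of _ M]
  by (intro equalityI idl_mult_least) (auto simp: submodule_def)

lemma idl_mult_R_right: "submodule R M \<Longrightarrow> idl_mult M R = M"
  using idl_mult_R_left by (simp add: idl_mult_commute)

lemma idl_mult_subset_left: "submodule R A \<Longrightarrow> B \<subseteq> R \<Longrightarrow> idl_mult B A \<subseteq> A"
  using idl_mult_mono[of B R A A] idl_mult_R_left by blast

lemma idl_mult_subset_right: "submodule R A \<Longrightarrow> B \<subseteq> R \<Longrightarrow> idl_mult A B \<subseteq> A"
  using idl_mult_subset_left by (simp add: idl_mult_commute)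

lemma ideal_of_eq_R:
  assumes "ideal_of R I" "1 \<in> I"
  shows "I = R"
proof
  show "R \<subseteq> I"
  proof
    fix r assume "r \<in> R"
    then have "r * 1 \<in> I" using assms unfolding ideal_of_def submodule_def by blast
    then show "r \<in> I" by simp
  qed
qed (use assms in \<open>simp add: ideal_of_def\<close>)

lemma idl_sum_R_left: "ideal_of R J \<Longrightarrow> idl_sum R J = R"
  by (intro ideal_of_eq_R ideal_of_idl_sum ideal_of_R)
    (use idl_sum_upper1 one_mem in \<open>auto simp: ideal_of_def submodule_def\<close>)

lemma coprime_idl_mult:
  assumes b: "ideal_of R b" and c: "ideal_of R c" and d: "ideal_of R d"
    and bc: "idl_sum b c = R" and bd: "idl_sum b d = R"
  shows "idl_sum b (idl_mult c d) = R"
proof (rule ideal_of_eq_R[OF ideal_of_idl_sum[OF b ideal_of_idl_mult[OF c d]]])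
  have "1 \<in> idl_sum b c" "1 \<in> idl_sum b d" using bc bd one_mem by simp_all
  then obtain b1 c1 b2 d2 where "b1 \<in> b" "c1 \<in> c" "b2 \<in> b" "d2 \<in> d"
    and one1: "1 = b1 + c1" and one2: "1 = b2 + d2"
    unfolding mem_idl_sum_iff by blast
  have "1 = b1 + c1 * (b2 + d2)" using one1 one2 by simp
  then have "1 = (b1 + c1 * b2) + c1 * d2" by (simp add: algebra_simps)
  moreover have "b1 + c1 * b2 \<in> b"
    using b c \<open>b1 \<in> b\<close> \<open>c1 \<in> c\<close> \<open>b2 \<in> b\<close> unfolding ideal_of_def submodule_def by blast
  ultimately show "1 \<in> idl_sum b (idl_mult c d)"
    unfolding mem_idl_sum_iff using \<open>c1 \<in> c\<close> \<open>d2 \<in> d\<close> by (blast intro: idl_mult_memI)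
qed

lemma idl_sum_coprime_absorb:
  assumes b: "ideal_of R b" and I: "ideal_of R I" and J: "ideal_of R J"
    and bJ: "idl_sum b J = R"
  shows "idl_sum (idl_mult b I) J = idl_sum I J"
proof
  have Is: "submodule R I" "I \<subseteq> R" and Js: "submodule R J" "J \<subseteq> R" and bs: "submodule R b"
    using I J b by (simp_all add: ideal_of_def)
  show "idl_sum (idl_mult b I) J \<subseteq> idl_sum I J"
    using idl_mult_subset_left[OF Is(1)] b by (intro idl_sum_mono) (auto simp: ideal_of_def)
  have S: "submodule R (idl_sum (idl_mult b I) J)"
    using submodule_idl_sum[OF submodule_idl_mult[OF bs Is(1)] Js(1)] .
  have "I = idl_mult (idl_sum b J) I"
    using bJ idl_mult_R_left[OF Is(1)] by simp
  also have "\<dots> = idl_sum (idl_mult b I) (idl_mult J I)"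
    using bs Js(1) by (intro idl_mult_idl_sum_distrib) (simp_all add: submodule_def)
  also have "\<dots> \<subseteq> idl_sum (idl_mult b I) J"
    by (rule idl_sum_mono[OF order_refl idl_mult_subset_right[OF Js(1) Is(2)]])
  finally have "I \<subseteq> idl_sum (idl_mult b I) J" .
  moreover have "J \<subseteq> idl_sum (idl_mult b I) J"
    by (rule idl_sum_upper2[OF zero_in_idl_mult])
  ultimately show "idl_sum I J \<subseteq> idl_sum (idl_mult b I) J"
    using S by (intro idl_sum_least) (auto simp: submodule_def)
qed

lemma invertible_submodule: "invertible R I \<Longrightarrow> submodule R I"
  unfolding invertible_def by blast

lemma colon_eq_idl_mult:
  assumes M: "submodule R M" and I: "submodule R I" and J: "submodule R J"
    and IJ: "idl_mult I J = R"
  shows "colon R M I = idl_mult M J"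
proof
  show "colon R M I \<subseteq> idl_mult M J"
  proof
    fix z assume z: "z \<in> colon R M I"
    have "idl_mult I J \<subseteq> {x. z * x \<in> idl_mult M J}"
      by (rule idl_mult_least) (use z in \<open>auto simp: colon_def distrib_left mult.assoc[symmetric]
            intro: zero_in_idl_mult idl_mult_add_closed idl_mult_memI\<close>)
    then show "z \<in> idl_mult M J" using IJ one_mem by force
  qed
  show "idl_mult M J \<subseteq> colon R M I"
  proof (rule idl_mult_least)
    fix a b assume "a \<in> M" "b \<in> J"
    have "(b * y) * a \<in> M" if "y \<in> I" for y
    proof -
      have "b * y \<in> R" using idl_mult_memI[OF that \<open>b \<in> J\<close>] IJ by (simp add: mult.commute)
      then show ?thesis using M \<open>a \<in> M\<close> unfolding submodule_def by blast
    qed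
    moreover have "a * b \<in> frac_field R"
      using M J \<open>a \<in> M\<close> \<open>b \<in> J\<close> frac_field_mult by (auto simp: submodule_def)
    ultimately show "a * b \<in> colon R M I" unfolding colon_def by (simp add: ac_simps)
  qed (use M in \<open>auto simp: colon_def submodule_def distrib_right intro: frac_field_add\<close>)
qed

lemma invertible_inverse:
  assumes "invertible R I"
  shows "submodule R (inv_ideal I)" and "idl_mult I (inv_ideal I) = R"
    and "invertible R (inv_ideal I)" and "inv_ideal (inv_ideal I) = I"
proof -
  obtain J where I: "submodule R I" and J: "submodule R J" and IJ: "idl_mult I J = R"
    using assms unfolding invertible_def by blast
  have invI: "inv_ideal I = J"
    using colon_eq_idl_mult[OF submodule_R I J IJ] idl_mult_R_left[OF J] by simp
  have JI: "idl_mult J I = R" using IJ by (simp add: idl_mult_commute)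
  have invJ: "inv_ideal J = I"
    using colon_eq_idl_mult[OF submodule_R J I JI] idl_mult_R_left[OF I] by simp
  show "submodule R (inv_ideal I)" using invI J by simp
  show "idl_mult I (inv_ideal I) = R" using invI IJ by simp
  show "invertible R (inv_ideal I)" unfolding invI invertible_def using J I JI by blast
  show "inv_ideal (inv_ideal I) = I" using invI invJ by simp
qed

lemma colon_eq_idl_mult_inverse:
  assumes "submodule R M" and J: "invertible R J"
  shows "colon R M J = idl_mult M (inv_ideal J)"
  by (rule colon_eq_idl_mult[OF assms(1) invertible_submodule[OF J] invertible_inverse(1,2)[OF J]])

lemma invertible_R: "invertible R R"
  unfolding invertible_def using submodule_R idl_mult_R_left by blast

lemma inv_ideal_R: "inv_ideal R = R"
  using colon_eq_idl_mult[OF submodule_R submodule_R submodule_R] idl_mult_R_left[OF submodule_R]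
  by simp

lemma invertible_idl_mult:
  assumes I: "invertible R I" and J: "invertible R J"
  shows "invertible R (idl_mult I J)"
    and "inv_ideal (idl_mult I J) = idl_mult (inv_ideal I) (inv_ideal J)"
proof -
  have "idl_mult (idl_mult I J) (idl_mult (inv_ideal I) (inv_ideal J))
      = idl_mult (idl_mult I (inv_ideal I)) (idl_mult J (inv_ideal J))"
    by (simp only: idl_mult_ac)
  also have "\<dots> = R"
    using invertible_inverse(2)[OF I] invertible_inverse(2)[OF J] idl_mult_R_left[OF submodule_R]
    by simp
  finally have inv: "idl_mult (idl_mult I J) (idl_mult (inv_ideal I) (inv_ideal J)) = R" .
  have sub: "submodule R (idl_mult I J)" "submodule R (idl_mult (inv_ideal I) (inv_ideal J))"
    using I J invertible_inverse(1) invertible_submodule submodule_idl_mult by auto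
  show "invertible R (idl_mult I J)"
    unfolding invertible_def using sub inv by blast
  show "inv_ideal (idl_mult I J) = idl_mult (inv_ideal I) (inv_ideal J)"
    using colon_eq_idl_mult[OF submodule_R sub inv] idl_mult_R_left[OF sub(2)] by simp
qed

lemma idl_mult_cancel_subset:
  assumes b: "invertible R b" and I: "submodule R I" and J: "submodule R J"
    and le: "idl_mult b I \<subseteq> idl_mult b J"
  shows "I \<subseteq> J"
proof -
  have "idl_mult (inv_ideal b) (idl_mult b K) = K" if "submodule R K" for K
  proof -
    have "idl_mult (inv_ideal b) (idl_mult b K) = idl_mult (idl_mult b (inv_ideal b)) K"
      by (simp only: idl_mult_ac)
    then show ?thesis using invertible_inverse(2)[OF b] idl_mult_R_left[OF that] by simp
  qed
  then show ?thesis
    using idl_mult_mono[OF order_refl le, of "inv_ideal b"] I J by simp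
qed

lemma invertible_nonzero: "invertible R I \<Longrightarrow> I \<noteq> {0}"
proof
  assume "invertible R I" "I = {0}"
  then have "idl_mult {0} (inv_ideal {0}) = R" using invertible_inverse(2) by blast
  moreover have "idl_mult {0} (inv_ideal {0}) \<subseteq> {0}" by (rule idl_mult_least) auto
  ultimately show False using one_mem by auto
qed

lemma colon_factorization:
  assumes I: "ideal_of R I" and P: "ideal_of R P" "invertible R P" and "I \<subseteq> P"
  shows "colon R I P \<subseteq> R" and "idl_mult P (colon R I P) = I" and "I \<subseteq> colon R I P"
proof -
  have IP: "colon R I P = idl_mult I (inv_ideal P)"
    using I P(2) colon_eq_idl_mult_inverse by (simp add: ideal_of_def)
  have sub: "submodule R (colon R I P)"
    unfolding IP using I invertible_inverse(1)[OF P(2)] submodule_idl_mult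
    by (simp add: ideal_of_def)
  show "colon R I P \<subseteq> R"
    using idl_mult_mono[OF \<open>I \<subseteq> P\<close> order_refl, of "inv_ideal P"] invertible_inverse(2)[OF P(2)]
    unfolding IP by simp
  have "idl_mult P (colon R I P) = idl_mult I (idl_mult P (inv_ideal P))"
    unfolding IP by (rule idl_mult_left_commute)
  also have "\<dots> = I"
    using invertible_inverse(2)[OF P(2)] idl_mult_R_right I by (simp add: ideal_of_def)
  finally show "idl_mult P (colon R I P) = I" .
  then show "I \<subseteq> colon R I P"
    using idl_mult_subset_left[OF sub, of P] P(1) unfolding ideal_of_def by blast
qed

lemma colon_factorization_strict:
  assumes I: "ideal_of R I" "invertible R I" and P: "ideal_of R P" "invertible R P"
    and "I \<subseteq> P" "P \<noteq> R"
  shows "I \<subset> colon R I P"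
proof -
  note factor = colon_factorization[OF I(1) P \<open>I \<subseteq> P\<close>]
  have "I \<noteq> colon R I P"
  proof
    assume "I = colon R I P"
    then have "idl_mult I P = idl_mult I R"
      using factor(2) idl_mult_R_right I(1) by (simp add: idl_mult_commute ideal_of_def)
    then have "R \<subseteq> P"
      using idl_mult_cancel_subset[OF I(2) submodule_R] P(1) by (simp add: ideal_of_def)
    then show False using P(1) \<open>P \<noteq> R\<close> by (simp add: ideal_of_def subset_antisym)
  qed
  then show ?thesis using factor(3) by blast
qed

lemma ideal_of_closure:
  assumes "\<forall>I\<in>X. ideal_of R I" and "I \<in> ideal_closure R X"
  shows "ideal_of R I"
  using assms(2)
proof (induction rule: ideal_closure.induct)
  case (div I J)
  have "colon R I J = idl_mult I (inv_ideal J)"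
    using colon_eq_idl_mult_inverse div.hyps(3,5) unfolding ideal_of_def by blast
  then have "submodule R (colon R I J)"
    using submodule_idl_mult invertible_inverse(1)[OF div.hyps(5)] div.hyps(3)
    unfolding ideal_of_def by simp
  then show ?case using div.hyps(6) unfolding ideal_of_def by blast
qed (use assms(1) ideal_of_R ideal_of_idl_sum ideal_of_idl_mult in auto)

end

section \<open>Products of a coprime family of invertible ideals\<close>

inductive_set ideal_products :: "'a::field set \<Rightarrow> 'a set set \<Rightarrow> 'a set set"
  for R :: "'a set" and B :: "'a set set" where
  unit: "R \<in> ideal_products R B"
| mult: "b \<in> B \<Longrightarrow> I \<in> ideal_products R B \<Longrightarrow> idl_mult b I \<in> ideal_products R B"

locale coprime_ideals = field_subring R for R :: "'a::field set" +
  fixes B :: "'a set set"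
  assumes ideal_basis: "b \<in> B \<Longrightarrow> ideal_of R b"
    and invertible_basis: "b \<in> B \<Longrightarrow> invertible R b"
    and basis_neq_R: "b \<in> B \<Longrightarrow> b \<noteq> R"
    and basis_coprime: "b \<in> B \<Longrightarrow> c \<in> B \<Longrightarrow> b \<noteq> c \<Longrightarrow> idl_sum b c = R"
begin

abbreviation products :: "'a set set" where
  "products \<equiv> ideal_products R B"

lemma submodule_basis: "b \<in> B \<Longrightarrow> submodule R b"
  using ideal_basis by (simp add: ideal_of_def)

lemma basis_subset_R: "b \<in> B \<Longrightarrow> b \<subseteq> R"
  using ideal_basis by (simp add: ideal_of_def)

lemma ideal_products_ideal: "I \<in> products \<Longrightarrow> ideal_of R I"
  by (induction rule: ideal_products.induct) (auto intro: ideal_of_R ideal_of_idl_mult ideal_basis)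

lemma ideal_products_invertible: "I \<in> products \<Longrightarrow> invertible R I"
  by (induction rule: ideal_products.induct)
    (auto intro: invertible_R invertible_idl_mult invertible_basis)

lemma submodule_ideal_products: "I \<in> products \<Longrightarrow> submodule R I"
  using ideal_products_ideal by (simp add: ideal_of_def)

lemma ideal_products_subset_R: "I \<in> products \<Longrightarrow> I \<subseteq> R"
  using ideal_products_ideal by (simp add: ideal_of_def)

lemma basis_in_ideal_products:
  assumes "b \<in> B"
  shows "b \<in> products"
  using ideal_products.mult[OF assms ideal_products.unit[of R B]]
    idl_mult_R_right[OF submodule_basis[OF assms]]
  by simp

lemma ideal_products_idl_mult: "I \<in> products \<Longrightarrow> J \<in> products \<Longrightarrow> idl_mult I J \<in> products"
proof (induction rule: ideal_products.induct)
  case unit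
  then show ?case using idl_mult_R_left submodule_ideal_products by simp
next
  case (mult b I)
  then show ?case using ideal_products.mult by (simp add: idl_mult_assoc)
qed

lemma ideal_products_subset_or_coprime:
  assumes "J \<in> products" and b: "b \<in> B"
  shows "J \<subseteq> b \<or> idl_sum b J = R"
  using assms(1)
proof (induction rule: ideal_products.induct)
  case unit
  then show ?case using idl_sum_R_left[OF ideal_basis[OF b]] by (simp add: idl_sum_commute)
next
  case (mult c J)
  show ?case
  proof (cases "c = b")
    case True
    then show ?thesis
      using idl_mult_subset_right[OF submodule_basis[OF b] ideal_products_subset_R[OF mult.hyps(2)]]
      by simp
  next
    case False
    from mult.IH show ?thesis
    proof
      assume "J \<subseteq> b"
      then show ?thesis
        using idl_mult_subset_left[OF submodule_ideal_products[OF mult.hyps(2)]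
            basis_subset_R[OF mult.hyps(1)]]
        by blast
    next
      assume "idl_sum b J = R"
      then show ?thesis
        using coprime_idl_mult[OF ideal_basis[OF b] ideal_basis[OF mult.hyps(1)]
            ideal_products_ideal[OF mult.hyps(2)]]
          basis_coprime[OF b mult.hyps(1)] False by simp
    qed
  qed
qed

lemma ideal_products_divisible_by_basis:
  assumes "I \<in> products" and b: "b \<in> B" and "I \<subseteq> b"
  shows "\<exists>K\<in>products. I = idl_mult b K"
  using assms(1,3)
proof (induction rule: ideal_products.induct)
  case unit
  then show ?case using basis_subset_R[OF b] basis_neq_R[OF b] by blast
next
  case (mult c I)
  show ?case
  proof (cases "c = b")
    case True
    then show ?thesis using mult.hyps(2) by blast
  next
    case False
    have I: "submodule R I" "I \<subseteq> R"
      using submodule_ideal_products ideal_products_subset_R mult.hyps(2) by auto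
    have "I = idl_mult (idl_sum b c) I"
      using basis_coprime[OF b mult.hyps(1) False[symmetric]] idl_mult_R_left[OF I(1)] by simp
    also have "\<dots> = idl_sum (idl_mult b I) (idl_mult c I)"
      using submodule_basis[OF b] submodule_basis[OF mult.hyps(1)]
      by (intro idl_mult_idl_sum_distrib) (simp_all add: submodule_def)
    also have "\<dots> \<subseteq> b"
      using idl_mult_subset_right[OF submodule_basis[OF b] I(2)] mult.prems submodule_basis[OF b]
      by (intro idl_sum_least) (auto simp: submodule_def)
    finally obtain K where K: "K \<in> products" "I = idl_mult b K"
      using mult.IH by blast
    then have "idl_mult c I = idl_mult b (idl_mult c K)"
      by (simp add: idl_mult_left_commute)
    then show ?thesis using ideal_products.mult[OF mult.hyps(1) K(1)] by blast
  qed
qed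

lemma ideal_products_subset_imp_factor:
  assumes "J \<in> products" "I \<in> products" "I \<subseteq> J"
  shows "\<exists>K\<in>products. I = idl_mult J K"
  using assms
proof (induction arbitrary: I rule: ideal_products.induct)
  case unit
  then show ?case using idl_mult_R_left submodule_ideal_products by auto
next
  case (mult b J I)
  have "I \<subseteq> b"
    using mult.prems(2) idl_mult_subset_right[OF submodule_basis[OF mult.hyps(1)]
        ideal_products_subset_R[OF mult.hyps(2)]] by blast
  then obtain I' where I': "I' \<in> products" "I = idl_mult b I'"
    using ideal_products_divisible_by_basis[OF mult.prems(1) mult.hyps(1)] by blast
  have "I' \<subseteq> J"
    using idl_mult_cancel_subset[OF invertible_basis[OF mult.hyps(1)]
        submodule_ideal_products[OF I'(1)] submodule_ideal_products[OF mult.hyps(2)]]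
      mult.prems(2) I'(2) by simp
  then obtain K where "K \<in> products" "I' = idl_mult J K"
    using mult.IH[OF I'(1)] by blast
  then show ?case using I'(2) by (auto simp: idl_mult_assoc)
qed

lemma ideal_products_idl_sum:
  assumes "I \<in> products" and "J \<in> products"
  shows "idl_sum I J \<in> products"
  using assms
proof (induction arbitrary: J rule: ideal_products.induct)
  case unit
  then show ?case using idl_sum_R_left ideal_products_ideal ideal_products.unit by simp
next
  case (mult b I J)
  from ideal_products_subset_or_coprime[OF mult.prems mult.hyps(1)] show ?case
  proof
    assume "J \<subseteq> b"
    then obtain J' where J': "J' \<in> products" "J = idl_mult b J'"
      using ideal_products_divisible_by_basis[OF mult.prems mult.hyps(1)] by blast
    have "idl_sum (idl_mult b I) (idl_mult b J') = idl_mult b (idl_sum I J')"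
      using submodule_ideal_products[OF mult.hyps(2)] submodule_ideal_products[OF J'(1)]
        idl_mult_idl_sum_distrib[of I J' b]
      by (simp add: submodule_def idl_mult_commute)
    then show ?case
      using J'(2) ideal_products.mult[OF mult.hyps(1) mult.IH[OF J'(1)]] by simp
  next
    assume "idl_sum b J = R"
    then show ?case
      using idl_sum_coprime_absorb[OF ideal_basis[OF mult.hyps(1)]] mult.IH[OF mult.prems]
        ideal_products_ideal[OF mult.hyps(2)] ideal_products_ideal[OF mult.prems] by simp
  qed
qed

lemma ideal_products_in_gen_subgroup: "I \<in> products \<Longrightarrow> I \<in> gen_subgroup R B"
  by (induction rule: ideal_products.induct) (auto intro: gen_subgroup.intros)

lemma inv_ideal_products_in_gen_subgroup: "I \<in> products \<Longrightarrow> inv_ideal I \<in> gen_subgroup R B"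
proof (induction rule: ideal_products.induct)
  case unit
  then show ?case using inv_ideal_R gen_subgroup.one by simp
next
  case (mult b I)
  then show ?case
    using invertible_idl_mult(2)[OF invertible_basis[OF mult.hyps(1)]
        ideal_products_invertible[OF mult.hyps(2)]]
    by (simp add: gen_subgroup.inv gen_subgroup.mult)
qed

lemma gen_subgroup_eq_quotient:
  assumes "g \<in> gen_subgroup R B"
  shows "\<exists>P\<in>products. \<exists>Q\<in>products. g = idl_mult P (inv_ideal Q)"
  using assms
proof (induction rule: gen_subgroup.induct)
  case one
  have "R = idl_mult R (inv_ideal R)" using inv_ideal_R idl_mult_R_left[OF submodule_R] by simp
  then show ?case using ideal_products.unit by blast
next
  case (gen b)
  have "b = idl_mult b (inv_ideal R)"
    using inv_ideal_R idl_mult_R_right[OF submodule_basis[OF gen]] by simp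
  then show ?case using ideal_products.unit basis_in_ideal_products[OF gen] by blast
next
  case (inv b)
  have "inv_ideal b = idl_mult R (inv_ideal b)"
    using idl_mult_R_left[OF invertible_inverse(1)[OF invertible_basis[OF inv]]] by simp
  then show ?case using ideal_products.unit basis_in_ideal_products[OF inv] by blast
next
  case (mult g h)
  obtain P1 Q1 where 1: "P1 \<in> products" "Q1 \<in> products" "g = idl_mult P1 (inv_ideal Q1)"
    using mult.IH(1) by blast
  obtain P2 Q2 where 2: "P2 \<in> products" "Q2 \<in> products" "h = idl_mult P2 (inv_ideal Q2)"
    using mult.IH(2) by blast
  have "idl_mult g h = idl_mult (idl_mult P1 P2) (idl_mult (inv_ideal Q1) (inv_ideal Q2))"
    unfolding 1(3) 2(3) by (simp only: idl_mult_ac)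
  also have "\<dots> = idl_mult (idl_mult P1 P2) (inv_ideal (idl_mult Q1 Q2))"
    using invertible_idl_mult(2)[OF ideal_products_invertible[OF 1(2)]
        ideal_products_invertible[OF 2(2)]]
    by simp
  finally show ?case using ideal_products_idl_mult 1 2 by blast
qed

lemma integral_quotient_in_products:
  assumes P: "P \<in> products" and Q: "Q \<in> products" and PQ: "idl_mult P (inv_ideal Q) \<subseteq> R"
  shows "idl_mult P (inv_ideal Q) \<in> products"
proof -
  have Qinv: "idl_mult Q (inv_ideal Q) = R"
    using invertible_inverse(2)[OF ideal_products_invertible[OF Q]] .
  have "P = idl_mult Q (idl_mult P (inv_ideal Q))"
    using Qinv idl_mult_R_right[OF submodule_ideal_products[OF P]]
    by (simp add: idl_mult_left_commute)
  also have "\<dots> \<subseteq> Q"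
    by (rule idl_mult_subset_right[OF submodule_ideal_products[OF Q] PQ])
  finally obtain K where K: "K \<in> products" "P = idl_mult Q K"
    using ideal_products_subset_imp_factor[OF Q P] by blast
  have "idl_mult P (inv_ideal Q) = idl_mult K (idl_mult Q (inv_ideal Q))"
    unfolding K(2) by (simp only: idl_mult_ac)
  then show ?thesis using Qinv idl_mult_R_right[OF submodule_ideal_products[OF K(1)]] K(1) by simp
qed

lemma gen_subgroup_integral_in_products:
  "g \<in> gen_subgroup R B \<Longrightarrow> g \<subseteq> R \<Longrightarrow> g \<in> products"
  using gen_subgroup_eq_quotient integral_quotient_in_products by blast

lemma closure_subset_ideal_products:
  assumes "\<forall>I\<in>X. ideal_of R I" and "X \<subseteq> gen_subgroup R B"
  shows "ideal_closure R X \<subseteq> products"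
proof
  fix I assume "I \<in> ideal_closure R X"
  then show "I \<in> products"
  proof (induction rule: ideal_closure.induct)
    case (base_X I)
    then show ?case
      using assms gen_subgroup_integral_in_products by (auto simp: ideal_of_def)
  next
    case (div I J)
    then show ?case
      using colon_eq_idl_mult_inverse[OF submodule_ideal_products div.hyps(5)]
        integral_quotient_in_products by simp
  qed (auto intro: ideal_products.unit ideal_products_idl_sum ideal_products_idl_mult)
qed

end

lemma gen_subgroup_subset:
  assumes "\<And>P. P \<in> S \<Longrightarrow> P \<in> gen_subgroup R C \<and> colon R R P \<in> gen_subgroup R C"
  shows "gen_subgroup R S \<subseteq> gen_subgroup R C"
proof
  fix g assume "g \<in> gen_subgroup R S"
  then show "g \<in> gen_subgroup R C"
    by (induction rule: gen_subgroup.induct) (use assms in \<open>auto intro: gen_subgroup.intros\<close>)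
qed

lemma (in field_subring) coprime_basis_closure:
  assumes X: "\<forall>I\<in>X. ideal_of R I" and C: "coprime_basis R X C" and I: "I \<in> ideal_closure R X"
  shows "invertible R I" and "I \<in> gen_subgroup R C" and "inv_ideal I \<in> gen_subgroup R C"
proof -
  interpret coprime_ideals R C
    using C unfolding coprime_basis_def by unfold_locales auto
  have "I \<in> ideal_products R C"
    using closure_subset_ideal_products[OF X] C I unfolding coprime_basis_def by blast
  then show "invertible R I" "I \<in> gen_subgroup R C" "inv_ideal I \<in> gen_subgroup R C"
    by (simp_all add: ideal_products_invertible ideal_products_in_gen_subgroup
        inv_ideal_products_in_gen_subgroup)
qed

section \<open>Maximal proper members of the closure\<close>

definition closure_coatoms :: "'a::field set \<Rightarrow> 'a set set \<Rightarrow> 'a set set" where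
  "closure_coatoms R X = {I \<in> ideal_closure R X. card {J \<in> ideal_closure R X. I \<subseteq> J} = 2}"

context field_subring
begin

lemma mem_closure_coatoms_iff:
  assumes X: "\<forall>I\<in>X. ideal_of R I"
  shows "I \<in> closure_coatoms R X \<longleftrightarrow>
    I \<in> ideal_closure R X \<and> I \<noteq> R \<and> (\<forall>J\<in>ideal_closure R X. I \<subseteq> J \<longrightarrow> J = I \<or> J = R)"
    (is "_ \<longleftrightarrow> ?C \<and> _ \<and> _")
proof (cases ?C)
  case True
  define A where "A = {J \<in> ideal_closure R X. I \<subseteq> J}"
  have sub_R: "J \<subseteq> R" if "J \<in> ideal_closure R X" for J
    using ideal_of_closure[OF X that] by (simp add: ideal_of_def)
  have IR: "{I, R} \<subseteq> A"
    unfolding A_def using True sub_R ideal_closure.base_R by blast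
  have "card A = 2 \<longleftrightarrow> I \<noteq> R \<and> A = {I, R}"
  proof
    assume card: "card A = 2"
    then have "finite A" by (intro card_ge_0_finite) simp
    moreover have "I \<noteq> R"
    proof
      assume "I = R"
      then have "A = {R}" unfolding A_def using sub_R ideal_closure.base_R by blast
      then show False using card by simp
    qed
    moreover from this have "card {I, R} = card A" using card by simp
    ultimately show "I \<noteq> R \<and> A = {I, R}" using card_subset_eq[OF _ IR] by blast
  qed simp
  moreover have "A = {I, R} \<longleftrightarrow> (\<forall>J\<in>ideal_closure R X. I \<subseteq> J \<longrightarrow> J = I \<or> J = R)"
    using IR unfolding A_def by blast
  moreover have "I \<in> closure_coatoms R X \<longleftrightarrow> card A = 2"
    using True by (simp add: closure_coatoms_def A_def)
  ultimately show ?thesis using True by (simp only: simp_thms)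
qed (simp add: closure_coatoms_def)

lemma closure_coatoms_coprime:
  assumes X: "\<forall>I\<in>X. ideal_of R I"
    and P: "P \<in> closure_coatoms R X" and Q: "Q \<in> closure_coatoms R X" and "P \<noteq> Q"
  shows "idl_sum P Q = R"
proof -
  have P_cl: "P \<in> ideal_closure R X" and "P \<noteq> R"
    and P_max: "\<forall>J\<in>ideal_closure R X. P \<subseteq> J \<longrightarrow> J = P \<or> J = R"
    using P unfolding mem_closure_coatoms_iff[OF X] by auto
  have Q_cl: "Q \<in> ideal_closure R X"
    and Q_max: "\<forall>J\<in>ideal_closure R X. Q \<subseteq> J \<longrightarrow> J = Q \<or> J = R"
    using Q unfolding mem_closure_coatoms_iff[OF X] by auto
  have "0 \<in> P" "0 \<in> Q"
    using ideal_of_closure[OF X P_cl] ideal_of_closure[OF X Q_cl]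
    by (auto simp: ideal_of_def submodule_def)
  then have "P \<subseteq> idl_sum P Q" "Q \<subseteq> idl_sum P Q"
    using idl_sum_upper1[of Q P] idl_sum_upper2[of P Q] by auto
  moreover have "idl_sum P Q \<in> ideal_closure R X"
    using P_cl Q_cl by (rule ideal_closure.add)
  ultimately have "idl_sum P Q = P \<or> idl_sum P Q = R"
    using P_max by blast
  moreover have "idl_sum P Q \<noteq> P"
  proof
    assume "idl_sum P Q = P"
    then have "P = Q \<or> P = R" using Q_max P_cl \<open>Q \<subseteq> idl_sum P Q\<close> by auto
    then show False using \<open>P \<noteq> Q\<close> \<open>P \<noteq> R\<close> by blast
  qed
  ultimately show ?thesis by blast
qed

lemma exists_closure_coatom_above:
  assumes X: "\<forall>I\<in>X. ideal_of R I" and I: "I \<in> ideal_closure R X" "I \<noteq> R"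
    and fin: "finite {J \<in> ideal_closure R X. I \<subseteq> J}"
  obtains P where "P \<in> closure_coatoms R X" and "I \<subseteq> P"
proof -
  define T where "T = {J \<in> ideal_closure R X. I \<subseteq> J \<and> J \<noteq> R}"
  have "finite T" using fin by (rule rev_finite_subset) (auto simp: T_def)
  moreover have "I \<in> T" using I by (simp add: T_def)
  ultimately obtain P where P: "P \<in> T" "I \<subseteq> P" "\<forall>Q\<in>T. P \<subseteq> Q \<longrightarrow> P = Q"
    using finite_has_maximal2 by blast
  then have "P \<in> closure_coatoms R X"
    unfolding mem_closure_coatoms_iff[OF X] T_def by auto
  then show thesis using P(2) that by blast
qed

lemma closure_in_gen_subgroup_coatoms:
  assumes X: "\<forall>I\<in>X. ideal_of R I"
    and inv: "ideal_closure R X \<subseteq> {I. invertible R I}"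
    and fin: "\<And>I. ideal_of R I \<Longrightarrow> I \<noteq> {0} \<Longrightarrow> finite {J. ideal_of R J \<and> I \<subseteq> J}"
    and I: "I \<in> ideal_closure R X"
  shows "I \<in> gen_subgroup R (closure_coatoms R X)"
  using I
proof (induction "card {J. ideal_of R J \<and> I \<subseteq> J}" arbitrary: I rule: less_induct)
  case less
  show ?case
  proof (cases "I = R")
    case True
    then show ?thesis by (simp add: gen_subgroup.one)
  next
    case False
    have I_ideal: "ideal_of R I" and I_inv: "invertible R I"
      using ideal_of_closure[OF X less.prems] inv less.prems by auto
    have fin_I: "finite {J. ideal_of R J \<and> I \<subseteq> J}"
      using fin[OF I_ideal invertible_nonzero[OF I_inv]] .
    moreover have "{J \<in> ideal_closure R X. I \<subseteq> J} \<subseteq> {J. ideal_of R J \<and> I \<subseteq> J}"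
      using ideal_of_closure[OF X] by blast
    ultimately obtain P where P: "P \<in> closure_coatoms R X" "I \<subseteq> P"
      using exists_closure_coatom_above[OF X less.prems False] finite_subset by blast
    have P_cl: "P \<in> ideal_closure R X" "P \<noteq> R"
      using P(1) unfolding mem_closure_coatoms_iff[OF X] by blast+
    have P_ideal: "ideal_of R P" and P_inv: "invertible R P"
      using ideal_of_closure[OF X P_cl(1)] inv P_cl(1) by auto
    define I' where "I' = colon R I P"
    note factor = colon_factorization[OF I_ideal P_ideal P_inv P(2), folded I'_def]
    have I'_cl: "I' \<in> ideal_closure R X"
      unfolding I'_def using factor(1)
      by (intro ideal_closure.div[OF less.prems P_cl(1) I_ideal P_ideal P_inv]) (simp add: I'_def)
    have "I \<subset> I'"
      unfolding I'_def
      by (rule colon_factorization_strict[OF I_ideal I_inv P_ideal P_inv P(2) P_cl(2)])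
    then have "{J. ideal_of R J \<and> I' \<subseteq> J} \<subset> {J. ideal_of R J \<and> I \<subseteq> J}"
      using I_ideal by blast
    then have "card {J. ideal_of R J \<and> I' \<subseteq> J} < card {J. ideal_of R J \<and> I \<subseteq> J}"
      by (rule psubset_card_mono[OF fin_I])
    then have "I' \<in> gen_subgroup R (closure_coatoms R X)"
      using less.hyps I'_cl by blast
    from gen_subgroup.mult[OF gen_subgroup.gen[OF P(1)] this] show ?thesis
      using factor(2) by simp
  qed
qed

lemma coprime_basis_closure_coatoms:
  assumes X: "\<forall>I\<in>X. ideal_of R I"
    and inv: "ideal_closure R X \<subseteq> {I. invertible R I}"
    and fin: "\<And>I. ideal_of R I \<Longrightarrow> I \<noteq> {0} \<Longrightarrow> finite {J. ideal_of R J \<and> I \<subseteq> J}"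
  shows "coprime_basis R X (closure_coatoms R X)"
  unfolding coprime_basis_def
proof (intro conjI ballI impI)
  fix I assume "I \<in> closure_coatoms R X"
  then have "I \<in> ideal_closure R X" "I \<noteq> R"
    unfolding mem_closure_coatoms_iff[OF X] by blast+
  then show "ideal_of R I" "invertible R I" "I \<noteq> R"
    using ideal_of_closure[OF X] inv by auto
next
  show "X \<subseteq> gen_subgroup R (closure_coatoms R X)"
    using closure_in_gen_subgroup_coatoms[OF X inv fin] ideal_closure.base_X by blast
qed (rule closure_coatoms_coprime[OF X])

end

section \<open>Ideals of an order\<close>

lemma int_vectors_dependent:
  fixes v :: "'k \<Rightarrow> nat \<Rightarrow> int"
  assumes "finite K" and "n < card K"
  shows "\<exists>c. (\<exists>k\<in>K. c k \<noteq> 0) \<and> (\<forall>i<n. (\<Sum>k\<in>K. c k * v k i) = 0)"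
  using assms
proof (induction n arbitrary: K v)
  case 0
  then have "K \<noteq> {}" by auto
  then obtain k where "k \<in> K" by blast
  then show ?case by (intro exI[of _ "\<lambda>_. 1"]) auto
next
  case (Suc n)
  show ?case
  proof (cases "\<forall>k\<in>K. v k n = 0")
    case True
    obtain c where "\<exists>k\<in>K. c k \<noteq> 0" "\<forall>i<n. (\<Sum>k\<in>K. c k * v k i) = 0"
      using Suc.IH[of K v] Suc.prems by auto
    then show ?thesis using True by (auto simp: less_Suc_eq)
  next
    case False
    then obtain k0 where k0: "k0 \<in> K" "v k0 n \<noteq> 0" by blast
    define K' where "K' = K - {k0}"
    \<comment> \<open>eliminate the n-th coordinate, with k0 as pivot\<close>
    define w where "w k i = v k0 n * v k i - v k n * v k0 i" for k i
    have "finite K'" "n < card K'"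
      using Suc.prems k0(1) by (auto simp: K'_def)
    then obtain d where d: "\<exists>k\<in>K'. d k \<noteq> 0" "\<forall>i<n. (\<Sum>k\<in>K'. d k * w k i) = 0"
      using Suc.IH by blast
    define c where "c k = (if k = k0 then - (\<Sum>k'\<in>K'. d k' * v k' n) else d k * v k0 n)" for k
    have "\<exists>k\<in>K. c k \<noteq> 0"
      using d(1) k0(2) by (auto simp: c_def K'_def)
    moreover have "(\<Sum>k\<in>K. c k * v k i) = (\<Sum>k\<in>K'. d k * w k i)" for i
    proof -
      have "(\<Sum>k\<in>K. c k * v k i) = c k0 * v k0 i + (\<Sum>k\<in>K'. c k * v k i)"
        using Suc.prems(1) k0(1) by (simp add: K'_def sum.remove)
      also have "c k0 * v k0 i = - (\<Sum>k\<in>K'. d k * v k n * v k0 i)"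
        by (simp add: c_def sum_distrib_right)
      also have "(\<Sum>k\<in>K'. c k * v k i) = (\<Sum>k\<in>K'. d k * v k0 n * v k i)"
        by (rule sum.cong) (auto simp: c_def K'_def)
      also have "- (\<Sum>k\<in>K'. d k * v k n * v k0 i) + (\<Sum>k\<in>K'. d k * v k0 n * v k i)
          = (\<Sum>k\<in>K'. d k * w k i)"
        by (simp add: w_def sum_subtractf[symmetric] algebra_simps)
      finally show ?thesis .
    qed
    moreover have "w k n = 0" for k by (simp add: w_def)
    ultimately show ?thesis using d(2) by (intro exI[of _ c]) (auto simp: less_Suc_eq)
  qed
qed

context field_subring
begin

lemma of_int_mem: "of_int z \<in> R"
  by (induction z rule: int_induct[of _ 0]) (auto intro: zero_mem one_mem add_mem diff_mem)

lemma sum_mem: "(\<And>a. a \<in> A \<Longrightarrow> f a \<in> R) \<Longrightarrow> sum f A \<in> R"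
  by (induction A rule: infinite_finite_induct) (auto intro: zero_mem add_mem)

lemma power_mem: "x \<in> R \<Longrightarrow> x ^ k \<in> R"
  by (induction k) (auto intro: one_mem mult_mem)

text \<open>Once the powers of x are cancelled, the constant term is x times an element of R.\<close>

lemma int_poly_root_divides_int:
  assumes x: "x \<in> R" "x \<noteq> 0"
    and "\<exists>k\<le>N. c k \<noteq> 0" and "(\<Sum>k\<le>N. of_int (c k) * x ^ k) = 0"
  shows "\<exists>m s. m \<noteq> (0::int) \<and> s \<in> R \<and> of_int m = x * s"
  using assms(3,4)
proof (induction N arbitrary: c)
  case 0
  then show ?case using zero_mem by (intro exI[of _ "c 0"] exI[of _ 0]) auto
next
  case (Suc N)
  define t where "t = (\<Sum>k\<le>N. of_int (c (Suc k)) * x ^ k)"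
  have t: "t \<in> R" unfolding t_def by (intro sum_mem mult_mem of_int_mem power_mem x(1))
  have "(\<Sum>k\<le>Suc N. of_int (c k) * x ^ k) = of_int (c 0) + x * t"
    unfolding t_def sum.atMost_Suc_shift sum_distrib_left by (simp add: algebra_simps)
  then have ct: "of_int (c 0) = x * (- t)" using Suc.prems(2) by (simp add: eq_neg_iff_add_eq_0)
  show ?case
  proof (cases "c 0 = 0")
    case False
    then show ?thesis using ct uminus_mem[OF t] by blast
  next
    case True
    then have "t = 0" using ct x(2) by simp
    obtain k where k: "k \<le> Suc N" "c k \<noteq> 0" using Suc.prems(1) by blast
    with True obtain k' where "k = Suc k'" by (cases k) auto
    with k have "\<exists>k\<le>N. c (Suc k) \<noteq> 0" by auto
    with \<open>t = 0\<close> show ?thesis using Suc.IH[of "\<lambda>k. c (Suc k)"] by (simp add: t_def)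
  qed
qed

end

locale finite_rank_subring = field_subring R for R :: "'a::field set" +
  fixes n :: nat and b :: "nat \<Rightarrow> 'a"
  assumes generator_mem: "i < n \<Longrightarrow> b i \<in> R"
    and generates: "r \<in> R \<Longrightarrow> \<exists>c. r = (\<Sum>i<n. of_int (c i) * b i)"
begin

definition coord :: "'a \<Rightarrow> nat \<Rightarrow> int" where
  "coord r = (SOME c. r = (\<Sum>i<n. of_int (c i) * b i))"

lemma coord_expansion: "r \<in> R \<Longrightarrow> r = (\<Sum>i<n. of_int (coord r i) * b i)"
  unfolding coord_def using generates by (rule someI_ex)

lemma nonzero_ideal_contains_int:
  assumes I: "ideal_of R I" "I \<noteq> {0}"
  obtains M :: int where "M > 0" and "of_int M \<in> I"
proof -
  have Is: "submodule R I" "I \<subseteq> R" using I(1) by (simp_all add: ideal_of_def)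
  obtain x where x: "x \<in> I" "x \<noteq> 0" using I(2) Is(1) by (auto simp: submodule_def)
  have xR: "x \<in> R" using x(1) Is(2) by blast
  obtain c where c: "\<exists>k\<in>{..n}. c k \<noteq> 0" "\<forall>i<n. (\<Sum>k\<le>n. c k * coord (x ^ k) i) = 0"
    using int_vectors_dependent[of "{..n}" n "\<lambda>k. coord (x ^ k)"] by auto
  have "(\<Sum>k\<le>n. of_int (c k) * x ^ k)
      = (\<Sum>k\<le>n. of_int (c k) * (\<Sum>i<n. of_int (coord (x ^ k) i) * b i))"
    using coord_expansion[OF power_mem[OF xR]] by simp
  also have "\<dots> = (\<Sum>i<n. of_int (\<Sum>k\<le>n. c k * coord (x ^ k) i) * b i)"
    by (simp add: sum_distrib_left sum_distrib_right sum.swap[of _ "{..n}"] mult.assoc)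
  also have "\<dots> = 0" using c(2) by simp
  finally obtain m s where "m \<noteq> 0" "s \<in> R" "of_int m = x * s"
    using int_poly_root_divides_int[OF xR x(2)] c(1) by blast
  moreover have "s * x \<in> I" using Is(1) \<open>s \<in> R\<close> x(1) by (simp add: submodule_def)
  ultimately have "of_int m \<in> I" by (simp add: mult.commute)
  then have "of_int m * of_int m \<in> I"
    using Is(1) of_int_mem[of m] unfolding submodule_def by blast
  then show thesis using \<open>m \<noteq> 0\<close> by (intro that[of "m * m"]) (auto simp: zero_less_mult_iff)
qed

lemma same_residues_diff_mem:
  assumes I: "ideal_of R I" and M: "of_int M \<in> I" and r: "r \<in> R" "r' \<in> R"
    and res: "\<forall>i<n. coord r i mod M = coord r' i mod M"
  shows "r - r' \<in> I"
proof -
  define d where "d i = (coord r i - coord r' i) div M" for i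
  have "coord r i - coord r' i = M * d i" if "i < n" for i
    using res that by (simp add: d_def mod_eq_dvd_iff)
  note dd = this
  have "r - r' = (\<Sum>i<n. of_int (coord r i) * b i) - (\<Sum>i<n. of_int (coord r' i) * b i)"
    using coord_expansion[OF r(1)] coord_expansion[OF r(2)] by (rule arg_cong2[where f = minus])
  also have "\<dots> = (\<Sum>i<n. of_int (coord r i - coord r' i) * b i)"
    by (simp add: sum_subtractf[symmetric] algebra_simps)
  also have "\<dots> = (\<Sum>i<n. of_int (d i) * b i * of_int M)"
    by (rule sum.cong) (simp_all add: dd algebra_simps)
  also have "\<dots> = (\<Sum>i<n. of_int (d i) * b i) * of_int M"
    by (simp add: sum_distrib_right)
  also have "\<dots> \<in> I"
  proof -
    have "(\<Sum>i<n. of_int (d i) * b i) \<in> R"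
      by (intro sum_mem mult_mem of_int_mem generator_mem) simp
    then show ?thesis using I M unfolding ideal_of_def submodule_def by blast
  qed
  finally show ?thesis .
qed

text \<open>An ideal J containing the nonzero integer M is determined by the residues mod M of the
  coordinates of its elements, and there are only finitely many residue vectors.\<close>

lemma finite_ideals_above:
  assumes I: "ideal_of R I" "I \<noteq> {0}"
  shows "finite {J. ideal_of R J \<and> I \<subseteq> J}"
proof -
  obtain M :: int where "M > 0" "of_int M \<in> I" using nonzero_ideal_contains_int[OF I] .
  define res where "res r = map (\<lambda>i. coord r i mod M) [0..<n]" for r
  define L where "L = {xs. set xs \<subseteq> {0..<M} \<and> length xs = n}"
  have res_eq: "res r = res r' \<longleftrightarrow> (\<forall>i<n. coord r i mod M = coord r' i mod M)" for r r'
    by (auto simp: res_def list_eq_iff_nth_eq)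
  have determined: "J = {r \<in> R. res r \<in> res ` J}" if J: "ideal_of R J" "I \<subseteq> J" for J
  proof
    have Js: "submodule R J" "J \<subseteq> R" using J(1) by (simp_all add: ideal_of_def)
    show "J \<subseteq> {r \<in> R. res r \<in> res ` J}" using Js(2) by blast
    show "{r \<in> R. res r \<in> res ` J} \<subseteq> J"
    proof
      fix r assume "r \<in> {r \<in> R. res r \<in> res ` J}"
      then obtain j where j: "r \<in> R" "j \<in> J" "res r = res j" by blast
      have "r - j \<in> J"
        using same_residues_diff_mem[OF I(1) \<open>of_int M \<in> I\<close> j(1)] j Js(2) J(2) res_eq by blast
      then have "(r - j) + j \<in> J" using Js(1) j(2) unfolding submodule_def by blast
      then show "r \<in> J" by simp
    qed
  qed
  have "inj_on (\<lambda>J. res ` J) {J. ideal_of R J \<and> I \<subseteq> J}"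
  proof (rule inj_onI)
    fix J J' assume "J \<in> {J. ideal_of R J \<and> I \<subseteq> J}" "J' \<in> {J. ideal_of R J \<and> I \<subseteq> J}"
      and "res ` J = res ` J'"
    then show "J = J'" using determined[of J] determined[of J'] by simp
  qed
  moreover have "(\<lambda>J. res ` J) ` {J. ideal_of R J \<and> I \<subseteq> J} \<subseteq> Pow L"
    using \<open>M > 0\<close> by (auto simp: res_def L_def)
  moreover have "finite L"
    unfolding L_def by (rule finite_lists_length_eq) simp
  ultimately show ?thesis
    by (meson finite_Pow_iff inj_on_finite)
qed

end

lemma is_order_finite_rank:
  assumes "is_order R"
  obtains n b where "finite_rank_subring R n b"
proof -
  obtain n b where ring: "0 \<in> R" "1 \<in> R" "\<forall>x\<in>R. \<forall>y\<in>R. x + y \<in> R \<and> x - y \<in> R \<and> x * y \<in> R"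
    and gen: "\<forall>i<n. b i \<in> R"
    and rep: "\<forall>r\<in>R. \<exists>!c::nat \<Rightarrow> int. (\<forall>i\<ge>n. c i = 0) \<and> r = (\<Sum>i<n. of_int (c i) * b i)"
    using assms unfolding is_order_def by (elim conjE exE) blast
  have "finite_rank_subring R n b"
  proof unfold_locales
    fix r assume "r \<in> R"
    then show "\<exists>c. r = (\<Sum>i<n. of_int (c i) * b i)" using rep by blast
  qed (use ring gen in auto)
  then show thesis by (rule that)
qed

theorem proposition4p67:
  fixes R :: "'a::field set" and X :: "'a set set"
  assumes "is_order R"
    and "\<forall>I\<in>X. ideal_of R I \<and> I \<noteq> {0}"
  shows "((ideal_closure R X \<subseteq> {I. invertible R I}) \<longleftrightarrow> (\<exists>B. coprime_basis R X B)) \<and>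
         ((\<exists>B. coprime_basis R X B) \<longrightarrow>
           (let S = {I \<in> ideal_closure R X. card {J \<in> ideal_closure R X. I \<subseteq> J} = 2}
            in coprime_basis R X S \<and>
               (\<forall>C. coprime_basis R X C \<longrightarrow> gen_subgroup R S \<subseteq> gen_subgroup R C)))"
proof -
  obtain n b where "finite_rank_subring R n b" using is_order_finite_rank[OF assms(1)] .
  then interpret finite_rank_subring R n b .
  have X: "\<forall>I\<in>X. ideal_of R I" using assms(2) by blast
  have invertible: "ideal_closure R X \<subseteq> {I. invertible R I}" if "coprime_basis R X C" for C
    using coprime_basis_closure(1)[OF X that] by blast
  have basis: "coprime_basis R X (closure_coatoms R X)" if "ideal_closure R X \<subseteq> {I. invertible R I}"
    using coprime_basis_closure_coatoms[OF X that finite_ideals_above] .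
  have minimal: "gen_subgroup R (closure_coatoms R X) \<subseteq> gen_subgroup R C"
    if "coprime_basis R X C" for C
  proof (rule gen_subgroup_subset)
    fix P assume "P \<in> closure_coatoms R X"
    then have "P \<in> ideal_closure R X" by (simp add: closure_coatoms_def)
    then show "P \<in> gen_subgroup R C \<and> inv_ideal P \<in> gen_subgroup R C"
      using coprime_basis_closure(2,3)[OF X that] by blast
  qed
  show ?thesis
    unfolding Let_def closure_coatoms_def[symmetric] using invertible basis minimal by blast
qed

end
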